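(* For every pair of reals $\mu>\lambda\ge 0$ there exists a finite game $G$ (with two agents) and a welfare maximizer $a^*$ with $W(a^* )>0$ such that $G$ is $(\lambda,\mu)$-smooth, $G$ has a unique sink equilibrium (for the best-response process), and $\mathrm{PoS}(G)=0$.
   Context: A finite game $G$ consists of agents $N=\{1,\dots,n\}$, finite nonempty action sets $\mathcal A_i$, joint action set $\mathcal A=\mathcal A_1\times\cdots\times\mathcal A_n$, a welfare function $W:\mathcal A\to\mathbb R_{\ge 0}$ and utility functions $U_i:\mathcal A\to\mathbb R$, $i\in N$. For $a\in\mathcal A$, $a_{-i}$ denotes the actions of all agents other than $i$, and $(b_i,a_{-i})$ is the joint action obtained from $a$ by replacing $a_i$ with $b_i$. Fix $a^*\in\arg\max_{a\in\mathcal A}W(a)$. For $\mu\ge\lambda\ge0$, $G$ is $(\lambda,\mu)$-smooth if $\sum_{i=1}^n\big(U_i(a)-U_i(a^*_i,a_{-i})\big)\le\mu W(a)-\lambda W(a^* )$ for all $a\in\mathcal A$. The best response set of agent $i$ at $a$ is $\mathrm{BR}_i(a)=\arg\max_{b_i\in\mathcal A_i}U_i(b_i,a_{-i})$. The best-response process is the Markov chain on $\mathcal A$ in which, from state $a$, an agent $i$ is chosen uniformly at random from $N$, then $b_i$ is chosen uniformly at random from $\mathrm{BR}_i(a)$, and the next state is $(b_i,a_{-i})$. A sink strongly connected component is a nonempty set $S\subseteq\mathcal A$ such that for all $a,\bar a\in S$ there is a positive-probability path of the chain from $a$ to $\bar a$, and no state outside $S$ is reachable with positive probability from a state of $S$.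 A sink equilibrium is a stationary distribution $\sigma$ of the chain whose support equals a sink strongly connected component; $\mathrm{SE}$ is the set of sink equilibria, and $\mathrm{PoS}(G)=\min_{\sigma\in\mathrm{SE}}\mathbb E_{a\sim\sigma}[W(a)]/W(a^* )$. *)

theory Defs
  imports Complex_Main "HOL-Library.FuncSet"
begin

definition joint :: "nat \<Rightarrow> (nat \<Rightarrow> nat set) \<Rightarrow> (nat \<Rightarrow> nat) set" where
  "joint n A = PiE {..<n} A"

definition finite_game ::
  "nat \<Rightarrow> (nat \<Rightarrow> nat set) \<Rightarrow> ((nat \<Rightarrow> nat) \<Rightarrow> real) \<Rightarrow> (nat \<Rightarrow> (nat \<Rightarrow> nat) \<Rightarrow> real) \<Rightarrow> bool" where
  "finite_game n A W U \<longleftrightarrow> n \<ge> 1 \<and> (\<forall>i<n. finite (A i) \<and> A i \<noteq> {}) \<and>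
     (\<forall>a\<in>joint n A. W a \<ge> 0)"

definition welfare_max :: "nat \<Rightarrow> (nat \<Rightarrow> nat set) \<Rightarrow> ((nat \<Rightarrow> nat) \<Rightarrow> real) \<Rightarrow> (nat \<Rightarrow> nat) \<Rightarrow> bool" where
  "welfare_max n A W astar \<longleftrightarrow> astar \<in> joint n A \<and> (\<forall>a\<in>joint n A. W a \<le> W astar)"

definition smooth ::
  "nat \<Rightarrow> (nat \<Rightarrow> nat set) \<Rightarrow> ((nat \<Rightarrow> nat) \<Rightarrow> real) \<Rightarrow> (nat \<Rightarrow> (nat \<Rightarrow> nat) \<Rightarrow> real)
   \<Rightarrow> (nat \<Rightarrow> nat) \<Rightarrow> real \<Rightarrow> real \<Rightarrow> bool" where
  "smooth n A W U astar lam mu \<longleftrightarrow> mu \<ge> lam \<and> lam \<ge> 0 \<and>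
     (\<forall>a\<in>joint n A. (\<Sum>i<n. U i a - U i (a(i := astar i))) \<le> mu * W a - lam * W astar)"

definition BR :: "(nat \<Rightarrow> nat set) \<Rightarrow> (nat \<Rightarrow> (nat \<Rightarrow> nat) \<Rightarrow> real) \<Rightarrow> nat \<Rightarrow> (nat \<Rightarrow> nat) \<Rightarrow> nat set" where
  "BR A U i a = {b \<in> A i. \<forall>c\<in>A i. U i (a(i := c)) \<le> U i (a(i := b))}"

definition trans_prob ::
  "nat \<Rightarrow> (nat \<Rightarrow> nat set) \<Rightarrow> (nat \<Rightarrow> (nat \<Rightarrow> nat) \<Rightarrow> real) \<Rightarrow> (nat \<Rightarrow> nat) \<Rightarrow> (nat \<Rightarrow> nat) \<Rightarrow> real" where
  "trans_prob n A U a a' =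
     (\<Sum>i<n. (1 / real n) * (real (card {b \<in> BR A U i a. a(i := b) = a'}) / real (card (BR A U i a))))"

definition step_rel :: "nat \<Rightarrow> (nat \<Rightarrow> nat set) \<Rightarrow> (nat \<Rightarrow> (nat \<Rightarrow> nat) \<Rightarrow> real) \<Rightarrow> ((nat \<Rightarrow> nat) \<times> (nat \<Rightarrow> nat)) set" where
  "step_rel n A U = {(a, a'). a \<in> joint n A \<and> trans_prob n A U a a' > 0}"

definition sink_scc :: "nat \<Rightarrow> (nat \<Rightarrow> nat set) \<Rightarrow> (nat \<Rightarrow> (nat \<Rightarrow> nat) \<Rightarrow> real) \<Rightarrow> (nat \<Rightarrow> nat) set \<Rightarrow> bool" where
  "sink_scc n A U S \<longleftrightarrow> S \<noteq> {} \<and> S \<subseteq> joint n A \<and>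
     (\<forall>a\<in>S. \<forall>a'\<in>S. (a, a') \<in> (step_rel n A U)\<^sup>*) \<and>
     (\<forall>a\<in>S. \<forall>a'. (a, a') \<in> (step_rel n A U)\<^sup>* \<longrightarrow> a' \<in> S)"

definition stationary :: "nat \<Rightarrow> (nat \<Rightarrow> nat set) \<Rightarrow> (nat \<Rightarrow> (nat \<Rightarrow> nat) \<Rightarrow> real) \<Rightarrow> ((nat \<Rightarrow> nat) \<Rightarrow> real) \<Rightarrow> bool" where
  "stationary n A U \<sigma> \<longleftrightarrow> (\<forall>a. a \<notin> joint n A \<longrightarrow> \<sigma> a = 0) \<and> (\<forall>a\<in>joint n A. \<sigma> a \<ge> 0) \<and>
     (\<Sum>a\<in>joint n A. \<sigma> a) = 1 \<and>
     (\<forall>a'\<in>joint n A. \<sigma> a' = (\<Sum>a\<in>joint n A. \<sigma> a * trans_prob n A U a a'))"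

definition sink_equilibrium :: "nat \<Rightarrow> (nat \<Rightarrow> nat set) \<Rightarrow> (nat \<Rightarrow> (nat \<Rightarrow> nat) \<Rightarrow> real) \<Rightarrow> ((nat \<Rightarrow> nat) \<Rightarrow> real) \<Rightarrow> bool" where
  "sink_equilibrium n A U \<sigma> \<longleftrightarrow> stationary n A U \<sigma> \<and> sink_scc n A U {a \<in> joint n A. \<sigma> a > 0}"

definition PoS ::
  "nat \<Rightarrow> (nat \<Rightarrow> nat set) \<Rightarrow> ((nat \<Rightarrow> nat) \<Rightarrow> real) \<Rightarrow> (nat \<Rightarrow> (nat \<Rightarrow> nat) \<Rightarrow> real) \<Rightarrow> (nat \<Rightarrow> nat) \<Rightarrow> real" where
  "PoS n A W U astar =
     Inf {(\<Sum>a\<in>joint n A. \<sigma> a * W a) / W astar | \<sigma>. sink_equilibrium n A U \<sigma>}"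

end

theory Submission
  imports Defs
begin

text \<open>Take matching pennies on actions 0 and 1 and give both agents an extra action 2 that sets
every utility to 0 and the welfare to 1, while welfare is 0 on the four pennies profiles.
Against a pennies action, action 2 is never a best response, so the best-response process is
absorbed in the four-cycle of matching pennies; its unique sink equilibrium is uniform on that
cycle and has welfare 0, whence PoS = 0. Smoothness with respect to the optimum (2,2) holds
because on the cycle the loser pays 1 + \<lambda>, so the deviation sum is exactly
\<open>-\<lambda> = \<mu>\<cdot>0 - \<lambda>\<cdot>1\<close>, and off the cycle it is 0 \<le> \<mu> - \<lambda>.\<close>

lemma joint_upd:
  assumes "a \<in> joint n A" "i < n" "b \<in> A i"
  shows "a(i := b) \<in> joint n A"
  using assms by (auto simp: joint_def PiE_iff extensional_def)

lemma trans_prob_pos_imp_update: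
  assumes "trans_prob n A U a a' > 0"
  shows "\<exists>i<n. \<exists>b\<in>BR A U i a. a(i := b) = a'"
proof -
  have "trans_prob n A U a a' \<noteq> 0" using assms by linarith
  then obtain i where i: "i \<in> {..<n}"
    and "(1 / real n) * (real (card {b \<in> BR A U i a. a(i := b) = a'}) / real (card (BR A U i a))) \<noteq> 0"
    unfolding trans_prob_def by (rule sum.not_neutral_contains_not_neutral)
  then have "card {b \<in> BR A U i a. a(i := b) = a'} \<noteq> 0" by auto
  then have "{b \<in> BR A U i a. a(i := b) = a'} \<noteq> {}" by (metis card.empty)
  with i show ?thesis by blast
qed

lemma trans_prob_pos_iff:
  assumes "n > 0" and BR_fin: "\<And>i. i < n \<Longrightarrow> finite (BR A U i a) \<and> BR A U i a \<noteq> {}"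
  shows "trans_prob n A U a a' > 0 \<longleftrightarrow> (\<exists>i<n. \<exists>b\<in>BR A U i a. a(i := b) = a')"
proof
  assume "\<exists>i<n. \<exists>b\<in>BR A U i a. a(i := b) = a'"
  then obtain i b where i: "i < n" and b: "b \<in> BR A U i a" "a(i := b) = a'" by blast
  define t where "t j = (1 / real n) *
      (real (card {b \<in> BR A U j a. a(j := b) = a'}) / real (card (BR A U j a)))" for j
  have t_nonneg: "t j \<ge> 0" for j by (simp add: t_def)
  have "card {b \<in> BR A U i a. a(i := b) = a'} > 0"
    using BR_fin[OF i] b by (auto simp: card_gt_0_iff)
  moreover have "card (BR A U i a) > 0" using BR_fin[OF i] by (simp add: card_gt_0_iff)
  ultimately have "0 < t i" using \<open>n > 0\<close> by (simp add: t_def)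
  also have "t i \<le> (\<Sum>j<n. t j)" using i t_nonneg by (intro member_le_sum) auto
  finally show "trans_prob n A U a a' > 0" by (simp add: trans_prob_def t_def)
qed (rule trans_prob_pos_imp_update)

lemma BR_subset: "BR A U i a \<subseteq> A i"
  by (auto simp: BR_def)

lemma step_rel_joint:
  assumes "(a, a') \<in> step_rel n A U"
  shows "a \<in> joint n A" "a' \<in> joint n A"
proof -
  from assms show a: "a \<in> joint n A" by (simp add: step_rel_def)
  from assms obtain i b where "i < n" "b \<in> BR A U i a" "a(i := b) = a'"
    unfolding step_rel_def using trans_prob_pos_imp_update by blast
  then show "a' \<in> joint n A" using a BR_subset joint_upd by blast
qed

lemma rtrancl_step_rel_joint:
  "(a, a') \<in> (step_rel n A U)\<^sup>* \<Longrightarrow> a \<in> joint n A \<Longrightarrow> a' \<in> joint n A"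
  by (induction rule: rtrancl_induct) (blast dest: step_rel_joint)+

lemma sink_scc_iff_reachable_from:
  assumes c: "c \<in> joint n A" and reach_c: "\<And>a. a \<in> joint n A \<Longrightarrow> (a, c) \<in> (step_rel n A U)\<^sup>*"
  shows "sink_scc n A U S \<longleftrightarrow> S = {a. (c, a) \<in> (step_rel n A U)\<^sup>*}"
proof
  assume S: "sink_scc n A U S"
  then have closed: "\<And>s a. s \<in> S \<Longrightarrow> (s, a) \<in> (step_rel n A U)\<^sup>* \<Longrightarrow> a \<in> S"
    and connected: "\<And>s a. s \<in> S \<Longrightarrow> a \<in> S \<Longrightarrow> (s, a) \<in> (step_rel n A U)\<^sup>*"
    unfolding sink_scc_def by blast+
  from S obtain s where "s \<in> S" and "s \<in> joint n A" unfolding sink_scc_def by blast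
  then have "c \<in> S" using closed reach_c by blast
  then show "S = {a. (c, a) \<in> (step_rel n A U)\<^sup>*}" using closed connected by blast
next
  let ?R = "(step_rel n A U)\<^sup>*"
  assume S: "S = {a. (c, a) \<in> ?R}"
  have joint: "S \<subseteq> joint n A" using S c rtrancl_step_rel_joint by blast
  have "(a, a') \<in> ?R" if "a \<in> S" "a' \<in> S" for a a'
  proof -
    have "(a, c) \<in> ?R" using that(1) joint reach_c by blast
    moreover have "(c, a') \<in> ?R" using that(2) S by simp
    ultimately show ?thesis by (rule rtrancl_trans)
  qed
  moreover have "a' \<in> S" if "a \<in> S" "(a, a') \<in> ?R" for a a'
    using that S rtrancl_trans[of c a "step_rel n A U" a'] by simp
  moreover have "S \<noteq> {}" using S by blast
  ultimately show "sink_scc n A U S" using joint unfolding sink_scc_def by blast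
qed

lemma PoS_unique_sink_equilibrium:
  assumes "sink_equilibrium n A U \<sigma>" and "\<And>\<tau>. sink_equilibrium n A U \<tau> \<Longrightarrow> \<tau> = \<sigma>"
  shows "PoS n A W U astar = (\<Sum>a\<in>joint n A. \<sigma> a * W a) / W astar"
proof -
  have "{(\<Sum>a\<in>joint n A. \<tau> a * W a) / W astar | \<tau>. sink_equilibrium n A U \<tau>}
      = {(\<Sum>a\<in>joint n A. \<sigma> a * W a) / W astar}"
    using assms by (intro equalityI subsetI) (force, blast)
  then show ?thesis by (simp add: PoS_def)
qed

lemma trans_prob_two_agents_unique_best_responses:
  assumes "BR A U 0 a = {b\<^sub>0}" and "BR A U 1 a = {b\<^sub>1}"
  shows "trans_prob 2 A U a a' =
    (if a(0 := b\<^sub>0) = a' then 1/2 else 0) + (if a(1 := b\<^sub>1) = a' then 1/2 else 0)"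
proof -
  have card: "card {b. b = c \<and> P b} = (if P c then 1 else 0)" for c :: nat and P
    by (cases "P c") (simp_all add: Collect_conv_if)
  show ?thesis using assms by (simp add: trans_prob_def numeral_2_eq_2 lessThan_Suc card)
qed

definition pair_action :: "nat \<Rightarrow> nat \<Rightarrow> nat \<Rightarrow> nat" where
  "pair_action x y = (\<lambda>k. if k = 0 then x else if k = 1 then y else undefined)"

lemma pair_action_apply [simp]:
  "pair_action x y 0 = x" "pair_action x y (Suc 0) = y"
  by (auto simp: pair_action_def)

lemma pair_action_eq_iff [simp]: "pair_action x y = pair_action x' y' \<longleftrightarrow> x = x' \<and> y = y'"
  by (metis pair_action_apply)

lemma pair_action_upd [simp]:
  "(pair_action x y)(0 := b) = pair_action b y" "(pair_action x y)(Suc 0 := b) = pair_action x b"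
  by (auto simp: pair_action_def fun_eq_iff)

definition mp_actions :: "nat \<Rightarrow> nat set" where
  "mp_actions = (\<lambda>_. {0, 1, 2})"

text \<open>Agent 0 wants to match, agent 1 to mismatch. The absolute value only keeps the best
responses independent of the sign of the parameter.\<close>

definition mp_utility :: "real \<Rightarrow> nat \<Rightarrow> (nat \<Rightarrow> nat) \<Rightarrow> real" where
  "mp_utility lam i a = (if a 0 = 2 \<or> a 1 = 2 then 0
     else if i = 0 then (if a 0 = a 1 then 1 else - (1 + \<bar>lam\<bar>))
     else (if a 0 \<noteq> a 1 then 1 else - (1 + \<bar>lam\<bar>)))"

definition mp_welfare :: "(nat \<Rightarrow> nat) \<Rightarrow> real" where
  "mp_welfare a = (if a 0 = 2 \<or> a 1 = 2 then 1 else 0)"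

definition mp_cycle :: "(nat \<Rightarrow> nat) set" where
  "mp_cycle = {pair_action 0 0, pair_action 0 1, pair_action 1 1, pair_action 1 0}"

definition mp_uniform :: "(nat \<Rightarrow> nat) \<Rightarrow> real" where
  "mp_uniform a = (if a \<in> mp_cycle then 1/4 else 0)"

abbreviation mp_step :: "real \<Rightarrow> ((nat \<Rightarrow> nat) \<times> (nat \<Rightarrow> nat)) set" where
  "mp_step lam \<equiv> step_rel 2 mp_actions (mp_utility lam)"

lemma joint_mp_actions:
  "joint 2 mp_actions = {pair_action x y | x y. x \<in> {0, 1, 2} \<and> y \<in> {0, 1, 2}}"
proof (intro equalityI subsetI)
  fix a assume a: "a \<in> joint 2 mp_actions"
  then have "a = pair_action (a 0) (a 1)"
    by (auto simp: fun_eq_iff pair_action_def joint_def PiE_iff extensional_def)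
  moreover have "a 0 \<in> {0, 1, 2}" "a 1 \<in> {0, 1, 2}"
    using a by (auto simp: joint_def PiE_iff mp_actions_def)
  ultimately show "a \<in> {pair_action x y | x y. x \<in> {0, 1, 2} \<and> y \<in> {0, 1, 2}}" by blast
next
  fix a assume "a \<in> {pair_action x y | x y. x \<in> {0, 1, 2} \<and> y \<in> {0, 1, 2}}"
  then show "a \<in> joint 2 mp_actions"
    by (auto simp: joint_def mp_actions_def PiE_iff extensional_def pair_action_def less_2_cases_iff)
qed

lemma joint_mp_actions_enum:
  "joint 2 mp_actions = {pair_action 0 0, pair_action 0 1, pair_action 0 2,
     pair_action 1 0, pair_action 1 1, pair_action 1 2,
     pair_action 2 0, pair_action 2 1, pair_action 2 2}"
  unfolding joint_mp_actions by auto

lemma BR_mp_0 [simp]: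
  "y \<le> 2 \<Longrightarrow> BR mp_actions (mp_utility lam) 0 (pair_action x y) = (if y = 2 then {0, 1, 2} else {y})"
  unfolding BR_def mp_actions_def mp_utility_def
  by (auto simp: pair_action_def le_Suc_eq numeral_2_eq_2)

lemma BR_mp_1 [simp]:
  "x \<le> 2 \<Longrightarrow> BR mp_actions (mp_utility lam) (Suc 0) (pair_action x y)
     = (if x = 2 then {0, 1, 2} else {1 - x})"
  unfolding BR_def mp_actions_def mp_utility_def
  by (auto simp: pair_action_def le_Suc_eq numeral_2_eq_2)

lemma mp_step_iff:
  "(a, a') \<in> mp_step lam \<longleftrightarrow>
     a \<in> joint 2 mp_actions \<and> (\<exists>i<2. \<exists>b\<in>BR mp_actions (mp_utility lam) i a. a(i := b) = a')"
proof -
  have "finite (BR mp_actions (mp_utility lam) i a) \<and> BR mp_actions (mp_utility lam) i a \<noteq> {}"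
    if "a \<in> joint 2 mp_actions" "i < 2" for i
    using that unfolding joint_mp_actions by (auto simp: less_2_cases_iff)
  then show ?thesis
    using trans_prob_pos_iff[of 2 mp_actions "mp_utility lam" a a'] by (auto simp: step_rel_def)
qed

lemma mp_step_0:
  "x \<le> 2 \<Longrightarrow> y \<le> 2 \<Longrightarrow> b \<in> BR mp_actions (mp_utility lam) 0 (pair_action x y)
   \<Longrightarrow> (pair_action x y, pair_action b y) \<in> mp_step lam"
  unfolding mp_step_iff joint_mp_actions by (rule conjI, force) (rule exI[of _ 0], auto)

lemma mp_step_1:
  "x \<le> 2 \<Longrightarrow> y \<le> 2 \<Longrightarrow> b \<in> BR mp_actions (mp_utility lam) (Suc 0) (pair_action x y)
   \<Longrightarrow> (pair_action x y, pair_action x b) \<in> mp_step lam"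
  unfolding mp_step_iff joint_mp_actions by (rule conjI, force) (rule exI[of _ 1], auto)

lemma mp_edges:
  "(pair_action 0 0, pair_action 0 1) \<in> mp_step lam"
  "(pair_action 0 1, pair_action 1 1) \<in> mp_step lam"
  "(pair_action 1 1, pair_action 1 0) \<in> mp_step lam"
  "(pair_action 1 0, pair_action 0 0) \<in> mp_step lam"
  "(pair_action 0 2, pair_action 0 1) \<in> mp_step lam"
  "(pair_action 1 2, pair_action 1 0) \<in> mp_step lam"
  "(pair_action 2 0, pair_action 0 0) \<in> mp_step lam"
  "(pair_action 2 1, pair_action 1 1) \<in> mp_step lam"
  "(pair_action 2 2, pair_action 0 2) \<in> mp_step lam"
  by (rule mp_step_0 mp_step_1; simp)+

lemma mp_cycle_closed: "(a, a') \<in> mp_step lam \<Longrightarrow> a \<in> mp_cycle \<Longrightarrow> a' \<in> mp_cycle"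
  unfolding mp_step_iff mp_cycle_def by (auto simp: less_2_cases_iff)

lemma mp_reaches_00:
  assumes "a \<in> joint 2 mp_actions"
  shows "(a, pair_action 0 0) \<in> (mp_step lam)\<^sup>*"
proof -
  let ?R = "(mp_step lam)\<^sup>*"
  have from_10: "(pair_action 1 0, pair_action 0 0) \<in> ?R" using mp_edges(4) by blast
  have from_11: "(pair_action 1 1, pair_action 0 0) \<in> ?R"
    using mp_edges(3) from_10 by (rule converse_rtrancl_into_rtrancl)
  have from_01: "(pair_action 0 1, pair_action 0 0) \<in> ?R"
    using mp_edges(2) from_11 by (rule converse_rtrancl_into_rtrancl)
  have from_02: "(pair_action 0 2, pair_action 0 0) \<in> ?R"
    using mp_edges(5) from_01 by (rule converse_rtrancl_into_rtrancl)
  have from_12: "(pair_action 1 2, pair_action 0 0) \<in> ?R"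
    using mp_edges(6) from_10 by (rule converse_rtrancl_into_rtrancl)
  have from_20: "(pair_action 2 0, pair_action 0 0) \<in> ?R" using mp_edges(7) by blast
  have from_21: "(pair_action 2 1, pair_action 0 0) \<in> ?R"
    using mp_edges(8) from_11 by (rule converse_rtrancl_into_rtrancl)
  have from_22: "(pair_action 2 2, pair_action 0 0) \<in> ?R"
    using mp_edges(9) from_02 by (rule converse_rtrancl_into_rtrancl)
  show ?thesis
    using assms from_10 from_11 from_01 from_02 from_12 from_20 from_21 from_22
    unfolding joint_mp_actions_enum by auto
qed

lemma mp_reachable_from_00: "{a. (pair_action 0 0, a) \<in> (mp_step lam)\<^sup>*} = mp_cycle"
proof (intro equalityI subsetI)
  fix a assume "a \<in> {a. (pair_action 0 0, a) \<in> (mp_step lam)\<^sup>*}"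
  then have "(pair_action 0 0, a) \<in> (mp_step lam)\<^sup>*" by simp
  then show "a \<in> mp_cycle"
    by (induction rule: rtrancl_induct) (simp add: mp_cycle_def, blast intro: mp_cycle_closed)
next
  let ?R = "(mp_step lam)\<^sup>*"
  have "(pair_action 0 0, pair_action 0 1) \<in> ?R" using mp_edges(1) by blast
  moreover from this mp_edges(2) have "(pair_action 0 0, pair_action 1 1) \<in> ?R"
    by (rule rtrancl_into_rtrancl)
  moreover from this mp_edges(3) have "(pair_action 0 0, pair_action 1 0) \<in> ?R"
    by (rule rtrancl_into_rtrancl)
  ultimately show "a \<in> {a. (pair_action 0 0, a) \<in> ?R}" if "a \<in> mp_cycle" for a
    using that unfolding mp_cycle_def by auto
qed

lemma sink_scc_mp_iff: "sink_scc 2 mp_actions (mp_utility lam) S \<longleftrightarrow> S = mp_cycle"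
  using sink_scc_iff_reachable_from[OF _ mp_reaches_00] mp_reachable_from_00
  by (simp add: joint_mp_actions)

lemma trans_prob_mp_cycle:
  "trans_prob 2 mp_actions (mp_utility lam) (pair_action 0 0) a' =
     (if pair_action 0 0 = a' then 1/2 else 0) + (if pair_action 0 1 = a' then 1/2 else 0)"
  "trans_prob 2 mp_actions (mp_utility lam) (pair_action 0 1) a' =
     (if pair_action 1 1 = a' then 1/2 else 0) + (if pair_action 0 1 = a' then 1/2 else 0)"
  "trans_prob 2 mp_actions (mp_utility lam) (pair_action 1 1) a' =
     (if pair_action 1 1 = a' then 1/2 else 0) + (if pair_action 1 0 = a' then 1/2 else 0)"
  "trans_prob 2 mp_actions (mp_utility lam) (pair_action 1 0) a' =
     (if pair_action 0 0 = a' then 1/2 else 0) + (if pair_action 1 0 = a' then 1/2 else 0)"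
  using trans_prob_two_agents_unique_best_responses[of mp_actions "mp_utility lam" "pair_action 0 0" 0 1]
    trans_prob_two_agents_unique_best_responses[of mp_actions "mp_utility lam" "pair_action 0 1" 1 1]
    trans_prob_two_agents_unique_best_responses[of mp_actions "mp_utility lam" "pair_action 1 1" 1 0]
    trans_prob_two_agents_unique_best_responses[of mp_actions "mp_utility lam" "pair_action 1 0" 0 0]
  by simp_all

lemma mp_uniform_stationary: "stationary 2 mp_actions (mp_utility lam) mp_uniform"
  unfolding stationary_def
proof (intro conjI allI impI ballI)
  show "mp_uniform a = 0" if "a \<notin> joint 2 mp_actions" for a
    using that by (auto simp: mp_uniform_def mp_cycle_def joint_mp_actions_enum)
  show "(\<Sum>a\<in>joint 2 mp_actions. mp_uniform a) = 1"
    by (simp add: joint_mp_actions_enum mp_uniform_def mp_cycle_def)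
  show "mp_uniform a' = (\<Sum>a\<in>joint 2 mp_actions. mp_uniform a * trans_prob 2 mp_actions (mp_utility lam) a a')"
    if "a' \<in> joint 2 mp_actions" for a'
    using that unfolding joint_mp_actions_enum
    by (auto simp: mp_uniform_def mp_cycle_def trans_prob_mp_cycle[unfolded One_nat_def])
qed (simp add: mp_uniform_def)

lemma support_mp_uniform: "{a \<in> joint 2 mp_actions. mp_uniform a > 0} = mp_cycle"
  by (auto simp: mp_uniform_def mp_cycle_def joint_mp_actions_enum)

lemma sink_equilibrium_mp_iff:
  "sink_equilibrium 2 mp_actions (mp_utility lam) \<sigma> \<longleftrightarrow> \<sigma> = mp_uniform"
proof
  assume "sink_equilibrium 2 mp_actions (mp_utility lam) \<sigma>"
  then have stat: "stationary 2 mp_actions (mp_utility lam) \<sigma>"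
    and support: "{a \<in> joint 2 mp_actions. \<sigma> a > 0} = mp_cycle"
    by (simp_all add: sink_equilibrium_def sink_scc_mp_iff)
  from stat have off_joint: "\<And>a. a \<notin> joint 2 mp_actions \<Longrightarrow> \<sigma> a = 0"
    and nonneg: "\<And>a. a \<in> joint 2 mp_actions \<Longrightarrow> \<sigma> a \<ge> 0"
    and total: "(\<Sum>a\<in>joint 2 mp_actions. \<sigma> a) = 1"
    and balance: "\<And>a'. a' \<in> joint 2 mp_actions \<Longrightarrow>
      \<sigma> a' = (\<Sum>a\<in>joint 2 mp_actions. \<sigma> a * trans_prob 2 mp_actions (mp_utility lam) a a')"
    unfolding stationary_def by blast+
  have outside: "\<sigma> a = 0" if "a \<notin> mp_cycle" for a
    using that support off_joint nonneg[of a] by force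
  have "\<sigma> (pair_action 0 0) = \<sigma> (pair_action 0 0) / 2 + \<sigma> (pair_action 1 0) / 2"
    "\<sigma> (pair_action 0 1) = \<sigma> (pair_action 0 0) / 2 + \<sigma> (pair_action 0 1) / 2"
    "\<sigma> (pair_action 1 1) = \<sigma> (pair_action 0 1) / 2 + \<sigma> (pair_action 1 1) / 2"
    using balance[of "pair_action 0 0"] balance[of "pair_action 0 1"] balance[of "pair_action 1 1"]
    by (simp_all add: joint_mp_actions_enum outside mp_cycle_def trans_prob_mp_cycle[unfolded One_nat_def])
  moreover have "\<sigma> (pair_action 0 0) + \<sigma> (pair_action 0 1) + \<sigma> (pair_action 1 0) + \<sigma> (pair_action 1 1) = 1"
    using total by (simp add: joint_mp_actions_enum outside mp_cycle_def)
  ultimately have "\<sigma> a = 1/4" if "a \<in> mp_cycle" for a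
    using that unfolding mp_cycle_def by auto
  with outside show "\<sigma> = mp_uniform" by (auto simp: mp_uniform_def)
next
  assume "\<sigma> = mp_uniform"
  then show "sink_equilibrium 2 mp_actions (mp_utility lam) \<sigma>"
    by (simp add: sink_equilibrium_def mp_uniform_stationary support_mp_uniform sink_scc_mp_iff)
qed

lemma smooth_mp:
  assumes "0 \<le> lam" and "lam \<le> mu"
  shows "smooth 2 mp_actions mp_welfare (mp_utility lam) (pair_action 2 2) lam mu"
  using assms unfolding smooth_def
  by (auto simp: joint_mp_actions_enum mp_welfare_def mp_utility_def numeral_2_eq_2 lessThan_Suc)

theorem proposition3:
  fixes lam mu :: real
  assumes "0 \<le> lam" and "lam < mu"
  shows "\<exists>A W U astar.
           finite_game 2 A W U \<and> welfare_max 2 A W astar \<and> W astar > 0 \<and>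
           smooth 2 A W U astar lam mu \<and>
           (\<exists>!\<sigma>. sink_equilibrium 2 A U \<sigma>) \<and>
           PoS 2 A W U astar = 0"
proof (intro exI conjI)
  show "finite_game 2 mp_actions mp_welfare (mp_utility lam)"
    by (auto simp: finite_game_def mp_actions_def mp_welfare_def)
  show "welfare_max 2 mp_actions mp_welfare (pair_action 2 2)"
    by (auto simp: welfare_max_def joint_mp_actions_enum mp_welfare_def)
  show "mp_welfare (pair_action 2 2) > 0" by (simp add: mp_welfare_def)
  show "smooth 2 mp_actions mp_welfare (mp_utility lam) (pair_action 2 2) lam mu"
    using assms by (intro smooth_mp) simp_all
  show "\<exists>!\<sigma>. sink_equilibrium 2 mp_actions (mp_utility lam) \<sigma>"
    by (simp add: sink_equilibrium_mp_iff)
  have "PoS 2 mp_actions mp_welfare (mp_utility lam) (pair_action 2 2)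
      = (\<Sum>a\<in>joint 2 mp_actions. mp_uniform a * mp_welfare a) / mp_welfare (pair_action 2 2)"
    by (rule PoS_unique_sink_equilibrium) (simp_all add: sink_equilibrium_mp_iff)
  then show "PoS 2 mp_actions mp_welfare (mp_utility lam) (pair_action 2 2) = 0"
    by (simp add: joint_mp_actions_enum mp_uniform_def mp_cycle_def mp_welfare_def)
qed

end
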